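(* Let $J=[\alpha,\beta]$ and let $u:J\to\mathbb R$ be continuous such that $J$ is admissible for $u$. If $u(\alpha)\ge0$ and $u(\beta)\ge0$, then $u(x)\ge0$ for all $x\in J$. Analogously, if $u(\alpha)\le 0$ and $u(\beta)\le 0$, then $u(x)\le0$ for all $x\in J$.
   Context: Double crossover: a continuous $u$ has a double crossover on $[\gamma,\eta]$ if for some $\sigma\in\{\pm1\}$: $\sigma u(\gamma)\ge0$, $\sigma u((\gamma+\eta)/2)\le0$ and $\sigma u(\eta)\ge0$. Dyadic points of $J=[\alpha,\beta]$: $d_{n,k}=\alpha+(\beta-\alpha)k/2^n$, $k=0,\dots,2^n$, $n\in\mathbb N_0$; dyadic subintervals: $[d_{n,k},d_{n,k+1}]$, $k=0,\dots,2^n-1$, $n\in\mathbb N_0$. $J$ is admissible for $u$ if $u$ has no double crossover on any dyadic subinterval of $J$. *)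

theory Defs
  imports "HOL-Analysis.Analysis"
begin

definition double_crossover :: "(real \<Rightarrow> real) \<Rightarrow> real \<Rightarrow> real \<Rightarrow> bool" where
  "double_crossover u \<gamma> \<eta> \<longleftrightarrow>
     (\<exists>\<sigma>\<in>{-1, 1::real}. \<sigma> * u \<gamma> \<ge> 0 \<and> \<sigma> * u ((\<gamma> + \<eta>) / 2) \<le> 0 \<and> \<sigma> * u \<eta> \<ge> 0)"

definition dyadic_point :: "real \<Rightarrow> real \<Rightarrow> nat \<Rightarrow> nat \<Rightarrow> real" where
  "dyadic_point \<alpha> \<beta> n k = \<alpha> + (\<beta> - \<alpha>) * real k / 2 ^ n"

definition admissible :: "(real \<Rightarrow> real) \<Rightarrow> real \<Rightarrow> real \<Rightarrow> bool" where
  "admissible u \<alpha> \<beta> \<longleftrightarrow>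
     (\<forall>n k. k < 2 ^ n \<longrightarrow>
        \<not> double_crossover u (dyadic_point \<alpha> \<beta> n k) (dyadic_point \<alpha> \<beta> n (Suc k)))"

end

theory Submission
  imports Defs
begin

(* Fix a sign s in {-1, 1} with s*u \<ge> 0 at both endpoints of [a, b].
   (1) By induction on the level n, s*u \<ge> 0 at every dyadic point of level n:
       a point of level n+1 is either a point of level n or the midpoint of a
       dyadic subinterval of level n; in the latter case s*u \<ge> 0 at both ends,
       so s*u at the midpoint must be positive, since otherwise the subinterval
       would carry a double crossover, contradicting admissibility.
   (2) Every x in [a, b] is the limit of a sequence of dyadic points, one of each
       level, because the points of level n form a grid of mesh (b - a)/2^n.
   (3) A continuous function that is nonnegative on all dyadic points is therefore
       nonnegative on [a, b]. *)

lemma dyadic_point_even: "dyadic_point a b (Suc n) (2 * k) = dyadic_point a b n k"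
  by (simp add: dyadic_point_def field_simps)

lemma dyadic_point_odd:
  "dyadic_point a b (Suc n) (2 * k + 1) =
     (dyadic_point a b n k + dyadic_point a b n (Suc k)) / 2"
  by (simp add: dyadic_point_def field_simps)

lemma dyadic_point_in_interval:
  assumes "a \<le> b" and "k \<le> 2 ^ n"
  shows "dyadic_point a b n k \<in> {a..b}"
proof -
  have q: "0 \<le> real k / 2 ^ n" "real k / 2 ^ n \<le> 1"
    using assms(2) by (auto simp: divide_le_eq)
  have "0 \<le> (b - a) * (real k / 2 ^ n)" "(b - a) * (real k / 2 ^ n) \<le> (b - a) * 1"
    using assms(1) q by (simp, intro mult_left_mono) simp_all
  moreover have "dyadic_point a b n k = a + (b - a) * (real k / 2 ^ n)"
    by (simp add: dyadic_point_def)
  ultimately show ?thesis by simp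
qed

lemma dyadic_point_approx:
  assumes "a \<le> b" and x: "x \<in> {a..b}"
  shows "\<exists>k \<le> 2 ^ n. \<bar>dyadic_point a b n k - x\<bar> \<le> (b - a) / 2 ^ n"
proof (cases "a = b")
  case True
  then show ?thesis using x by (intro exI[of _ 0]) (simp add: dyadic_point_def)
next
  case False
  then have ab: "a < b" using assms(1) by simp
  define t where "t = (x - a) / (b - a) * 2 ^ n"
  have t: "0 \<le> t" "t \<le> 2 ^ n"
    using x ab by (auto simp: t_def divide_le_eq)
  define k where "k = nat \<lfloor>t\<rfloor>"
  have k_real: "real k = of_int \<lfloor>t\<rfloor>"
    using t(1) by (simp add: k_def)
  have "\<lfloor>t\<rfloor> \<le> 2 ^ n"
    using t(2) by (simp add: floor_le_iff)
  then have "k \<le> 2 ^ n"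
    by (simp add: k_def nat_le_iff)
  have close: "\<bar>real k - t\<bar> \<le> 1"
    using k_real by linarith
  have "dyadic_point a b n k - x = (b - a) * (real k - t) / 2 ^ n"
    using ab by (simp add: dyadic_point_def t_def field_simps)
  then have "\<bar>dyadic_point a b n k - x\<bar> = (b - a) * \<bar>real k - t\<bar> / 2 ^ n"
    using ab by (simp add: abs_mult)
  also have "\<dots> \<le> (b - a) / 2 ^ n"
    using close ab by (simp add: divide_right_mono mult_left_le)
  finally show ?thesis using \<open>k \<le> 2 ^ n\<close> by blast
qed

lemma dyadic_points_converge:
  assumes "a \<le> b" and "x \<in> {a..b}"
  obtains k where "\<And>n. k n \<le> 2 ^ n" and "(\<lambda>n. dyadic_point a b n (k n)) \<longlonglongrightarrow> x"
proof -
  have "\<forall>n. \<exists>k. k \<le> 2 ^ n \<and> \<bar>dyadic_point a b n k - x\<bar> \<le> (b - a) / 2 ^ n"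
    using dyadic_point_approx[OF assms] by blast
  then obtain k where k: "\<And>n. k n \<le> 2 ^ n"
    and near: "\<And>n. \<bar>dyadic_point a b n (k n) - x\<bar> \<le> (b - a) / 2 ^ n"
    using choice[of "\<lambda>n k. k \<le> 2 ^ n \<and> \<bar>dyadic_point a b n k - x\<bar> \<le> (b - a) / 2 ^ n"]
    by blast
  have "(\<lambda>n. (b - a) / 2 ^ n) \<longlonglongrightarrow> 0"
    by (intro LIMSEQ_divide_realpow_zero) auto
  then have "(\<lambda>n. dyadic_point a b n (k n) - x) \<longlonglongrightarrow> 0"
    by (rule Lim_null_comparison[rotated]) (use near in \<open>auto intro: always_eventually\<close>)
  then have "(\<lambda>n. dyadic_point a b n (k n)) \<longlonglongrightarrow> x"
    by (simp add: LIM_zero_iff)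
  with k show ?thesis by (rule that)
qed

lemma nonneg_from_dyadic_points:
  fixes f :: "real \<Rightarrow> real"
  assumes "a \<le> b" and cont: "continuous_on {a..b} f"
    and dyadic: "\<And>n k. k \<le> 2 ^ n \<Longrightarrow> f (dyadic_point a b n k) \<ge> 0"
    and x: "x \<in> {a..b}"
  shows "f x \<ge> 0"
proof -
  obtain k where k: "\<And>n. k n \<le> 2 ^ n"
    and lim: "(\<lambda>n. dyadic_point a b n (k n)) \<longlonglongrightarrow> x"
    using dyadic_points_converge[OF assms(1) x] by blast
  have "(\<lambda>n. f (dyadic_point a b n (k n))) \<longlonglongrightarrow> f x"
    using continuous_on_tendsto_compose[OF cont lim x]
      dyadic_point_in_interval[OF assms(1) k] by (simp add: always_eventually)
  then show ?thesis
    by (rule LIMSEQ_le_const) (use dyadic k in auto)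
qed

text \<open>If s*u \<ge> 0 at both ends of an admissible interval, the same holds at every
  dyadic point: a midpoint with s*u \<le> 0 would create a double crossover.\<close>

lemma admissible_sign_at_dyadic_points:
  assumes adm: "admissible u a b" and s: "s \<in> {-1, 1::real}"
    and ends: "s * u a \<ge> 0" "s * u b \<ge> 0"
  shows "k \<le> 2 ^ n \<Longrightarrow> s * u (dyadic_point a b n k) \<ge> 0"
proof (induction n arbitrary: k)
  case 0
  then have "k = 0 \<or> k = 1" by auto
  then show ?case using ends by (auto simp: dyadic_point_def)
next
  case (Suc n)
  obtain j where "k = 2 * j \<or> k = 2 * j + 1"
    by (metis dvd_mult_div_cancel odd_two_times_div_two_succ)
  then show ?case
  proof
    assume "k = 2 * j"
    then show ?thesis using Suc by (simp add: dyadic_point_even)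
  next
    assume kj: "k = 2 * j + 1"
    then have j: "j < 2 ^ n" using Suc.prems by simp
    let ?l = "dyadic_point a b n j" and ?r = "dyadic_point a b n (Suc j)"
    have "s * u ?l \<ge> 0" "s * u ?r \<ge> 0" using Suc.IH j by simp_all
    moreover have "\<not> double_crossover u ?l ?r"
      using adm j unfolding admissible_def by blast
    ultimately have "s * u ((?l + ?r) / 2) > 0"
      using s unfolding double_crossover_def by force
    then show ?thesis unfolding kj dyadic_point_odd by simp
  qed
qed

lemma admissible_sign_preserved:
  assumes "a \<le> b" and cont: "continuous_on {a..b} u" and adm: "admissible u a b"
    and s: "s \<in> {-1, 1::real}" and ends: "s * u a \<ge> 0" "s * u b \<ge> 0"
    and x: "x \<in> {a..b}"
  shows "s * u x \<ge> 0"
proof (rule nonneg_from_dyadic_points[OF assms(1) _ _ x])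
  show "continuous_on {a..b} (\<lambda>y. s * u y)"
    using cont by (intro continuous_intros)
  show "\<And>n k. k \<le> 2 ^ n \<Longrightarrow> s * u (dyadic_point a b n k) \<ge> 0"
    using admissible_sign_at_dyadic_points[OF adm s ends] .
qed

theorem lemma2p3:
  fixes u :: "real \<Rightarrow> real" and \<alpha> \<beta> :: real
  assumes "\<alpha> \<le> \<beta>"
    and "continuous_on {\<alpha>..\<beta>} u"
    and "admissible u \<alpha> \<beta>"
  shows "(u \<alpha> \<ge> 0 \<and> u \<beta> \<ge> 0 \<longrightarrow> (\<forall>x\<in>{\<alpha>..\<beta>}. u x \<ge> 0))
       \<and> (u \<alpha> \<le> 0 \<and> u \<beta> \<le> 0 \<longrightarrow> (\<forall>x\<in>{\<alpha>..\<beta>}. u x \<le> 0))"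
proof safe
  fix x assume "u \<alpha> \<ge> 0" "u \<beta> \<ge> 0" "x \<in> {\<alpha>..\<beta>}"
  then show "u x \<ge> 0" using admissible_sign_preserved[OF assms, of 1 x] by simp
next
  fix x assume "u \<alpha> \<le> 0" "u \<beta> \<le> 0" "x \<in> {\<alpha>..\<beta>}"
  then show "u x \<le> 0" using admissible_sign_preserved[OF assms, of "-1" x] by simp
qed

end
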